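(* If $X$ is a topological space and $Y\subseteq X$ (with the subspace topology), then $\mathfrak{s}(Y)\leq\mathfrak{s}(X)$.
   Context: For infinite sets $U, A$, say $U$ splits $A$ if both $A\cap U$ and $A\setminus U$ are infinite. For a topological space $X$, $\mathfrak{s}(X)$ is the smallest cardinality of a family $\mathcal{U}$ of open subsets of $X$ such that every infinite $A\subseteq X$ is split by some $U\in\mathcal{U}$. *)

theory Defs
  imports "HOL-Analysis.Analysis"
begin

definition splits :: "'a set \<Rightarrow> 'a set \<Rightarrow> bool" where
  "splits U A \<longleftrightarrow> infinite (A \<inter> U) \<and> infinite (A - U)"

text \<open>A family of open sets of X splitting every infinite subset of X.
  s(X) is the least cardinality of such a family.\<close>
definition splitting_family :: "'a topology \<Rightarrow> 'a set set \<Rightarrow> bool" where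
  "splitting_family X \<U> \<longleftrightarrow>
     (\<forall>U\<in>\<U>. openin X U) \<and>
     (\<forall>A. A \<subseteq> topspace X \<and> infinite A \<longrightarrow> (\<exists>U\<in>\<U>. splits U A))"

end

theory Submission
  imports Defs
begin

(* Trace a splitting family of X on Y: an infinite A \<subseteq> Y is split by U iff it is split by
   Y \<inter> U, and U \<mapsto> Y \<inter> U does not increase cardinality. *)

lemma splits_Int_iff:
  assumes "A \<subseteq> Y"
  shows "splits (Y \<inter> U) A \<longleftrightarrow> splits U A"
proof -
  have "A \<inter> (Y \<inter> U) = A \<inter> U" "A - (Y \<inter> U) = A - U"
    using assms by auto
  then show ?thesis
    by (simp add: splits_def)
qed

lemma splitting_family_subtopology:
  assumes "splitting_family X \<U>"
  shows "splitting_family (subtopology X Y) ((\<inter>) Y ` \<U>)"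
  unfolding splitting_family_def
proof (intro conjI allI impI ballI)
  fix V
  assume "V \<in> (\<inter>) Y ` \<U>"
  then obtain U where "U \<in> \<U>" "V = Y \<inter> U"
    by blast
  then show "openin (subtopology X Y) V"
    using assms openin_subtopology_Int2 unfolding splitting_family_def
    by (metis Int_commute)
next
  fix A
  assume A: "A \<subseteq> topspace (subtopology X Y) \<and> infinite A"
  then have "A \<subseteq> Y" "A \<subseteq> topspace X"
    by auto
  with A assms obtain U where "U \<in> \<U>" "splits U A"
    unfolding splitting_family_def by blast
  with \<open>A \<subseteq> Y\<close> show "\<exists>V\<in>(\<inter>) Y ` \<U>. splits V A"
    using splits_Int_iff by blast
qed

theorem lemma2p2:
  fixes X :: "'a topology" and Y :: "'a set" and \<U> :: "'a set set"
  assumes "Y \<subseteq> topspace X"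
    and "splitting_family X \<U>"
  shows "\<exists>\<V>. splitting_family (subtopology X Y) \<V> \<and> (card_of \<V>, card_of \<U>) \<in> ordLeq"
proof (intro exI conjI)
  show "splitting_family (subtopology X Y) ((\<inter>) Y ` \<U>)"
    using assms(2) by (rule splitting_family_subtopology)
  show "(card_of ((\<inter>) Y ` \<U>), card_of \<U>) \<in> ordLeq"
    by (rule card_of_image)
qed

end
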